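(* Let $p,q\in\mathbb{N}$ and let $T=(T_{i,j})_{i,j\in\mathbb{N}_0}$ be a semi-infinite complex matrix with band structure $T_{i,j}=0$ whenever $j<i-p$ or $j>i+q$. For $N\in\mathbb{N}_0$ let $T^{[N]}=(T_{i,j})_{0\le i,j\le N}$ be its principal truncation of size $N+1$. Let $\nu\in\mathbb{C}^{p\times p}$ and $\xi\in\mathbb{C}^{q\times q}$ be invertible lower triangular matrices. Fix $a\in\{1,\dots,p\}$ and $b\in\{1,\dots,q\}$, and define the semi-infinite column vector $u_a^\nu$ whose entries with indices $0,\dots,p-1$ are the entries of $\nu^{-\top}e_a^{[p]}$ and whose remaining entries are $0$, and the semi-infinite row vector $u_b^\xi$ whose entries with indices $0,\dots,q-1$ are the entries of $(e_b^{[q]})^\top\xi^{-1}$ and whose remaining entries are $0$ (here $e_a^{[p]}$, $e_b^{[q]}$ are standard basis vectors of $\mathbb{C}^p$, $\mathbb{C}^q$). Let $e_a^\nu\in\mathbb{C}^{N+1}$ and $e_b^\xi\in\mathbb{C}^{N+1}$ denote the vectors formed by the entries with indices $0,\dots,N$ of $u_a^\nu$ and of $(u_b^\xi)^\top$, respectively. Define \[ d_{b,a}(N)\coloneq\left\lceil\frac{N+2-a}{p}\right\rceil+\left\lceil\frac{N+2-b}{q}\right\rceil-1 . \] Then for every $n\in\mathbb{N}_0$ and every $N\in\mathbb{N}_0$ with $n\le d_{b,a}(N)$, \[ u_b^\xi\,T^n\,u_a^\nu=(e_b^\xi)^\top\bigl(T^{[N]}\bigr)^n e_a^\nu . \]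
   Context: Powers $T^n$ of the banded semi-infinite matrix are defined by ordinary matrix multiplication (all sums involved are finite because of the band structure), with $T^0=I$. Since $\nu$ is lower triangular, $\nu^{-\top}e_a^{[p]}$ is supported in indices $\{0,\dots,a-1\}$, and $(e_b^{[q]})^\top\xi^{-1}$ is supported in indices $\{0,\dots,b-1\}$, so $u_b^\xi T^n u_a^\nu$ is a finite sum. *)

theory Defs
  imports "HOL-Analysis.Infinite_Sum" "Jordan_Normal_Form.Matrix"
begin

type_synonym smat = "nat \<Rightarrow> nat \<Rightarrow> complex"

definition banded :: "nat \<Rightarrow> nat \<Rightarrow> smat \<Rightarrow> bool" where
  "banded p q T \<longleftrightarrow> (\<forall>i j. (j + p < i \<or> j > i + q) \<longrightarrow> T i j = 0)"

text \<open>Product of semi-infinite matrices: entry (i,j) is the sum over k of A i k * B k j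
  (a finite sum for banded matrices; written as an infinite sum).\<close>
definition smat_mult :: "smat \<Rightarrow> smat \<Rightarrow> smat" where
  "smat_mult A B = (\<lambda>i j. \<Sum>\<^sub>\<infinity>k. A i k * B k j)"

definition smat_id :: smat where
  "smat_id = (\<lambda>i j. if i = j then 1 else 0)"

fun smat_pow :: "smat \<Rightarrow> nat \<Rightarrow> smat" where
  "smat_pow T 0 = smat_id"
| "smat_pow T (Suc n) = smat_mult (smat_pow T n) T"

definition trunc :: "smat \<Rightarrow> nat \<Rightarrow> complex mat" where
  "trunc T N = mat (N+1) (N+1) (\<lambda>(i,j). T i j)"

definition lower_triangular_mat :: "'a::zero mat \<Rightarrow> bool" where
  "lower_triangular_mat A \<longleftrightarrow> (\<forall>i<dim_row A. \<forall>j<dim_col A. i < j \<longrightarrow> A $$ (i,j) = 0)"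

text \<open>u_a^nu: entries 0..p-1 are nu^{-T} e_a, i.e. entry i is (nu^{-1})_{a-1,i}
  (a in 1..p); zero elsewhere. Given the inverse nui of nu.\<close>
definition u_col :: "nat \<Rightarrow> complex mat \<Rightarrow> nat \<Rightarrow> nat \<Rightarrow> complex" where
  "u_col p nui a i = (if i < p then (transpose_mat nui *\<^sub>v unit_vec p (a - 1)) $ i else 0)"

definition u_row :: "nat \<Rightarrow> complex mat \<Rightarrow> nat \<Rightarrow> nat \<Rightarrow> complex" where
  "u_row q xii b i = (if i < q then (transpose_mat xii *\<^sub>v unit_vec q (b - 1)) $ i else 0)"

definition d_ba :: "nat \<Rightarrow> nat \<Rightarrow> nat \<Rightarrow> nat \<Rightarrow> nat \<Rightarrow> int" where
  "d_ba p q b a N = \<lceil>(real N + 2 - real a) / real p\<rceil> + \<lceil>(real N + 2 - real b) / real q\<rceil> - 1"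

end

theory Submission
  imports Defs "Jordan_Normal_Form.Determinant"
begin

text \<open>The entry (i, j) of T^n is a sum over paths i = k_0, ..., k_n = j along nonzero entries
  of T. By the band structure such a path rises by at most q per step from i and, read backwards
  from j, by at most p per step, so k_l <= min (i + l q) (j + (n - l) p). The bound n <= d_{b,a}(N)
  makes this minimum at most N for all l whenever i < b and j < a, and the lower triangularity of
  nu and xi confines u_a^nu and u_b^xi to exactly these indices. So only paths inside the
  truncation T^[N] contribute to either side.\<close>

lemma lower_triangular_mat_inverse:
  fixes A B :: "'a::idom mat"
  assumes A: "A \<in> carrier_mat n n" and B: "B \<in> carrier_mat n n" and AB: "A * B = 1\<^sub>m n"
    and L: "lower_triangular_mat A"
  shows "lower_triangular_mat B"
proof -
  have A_upper: "A $$ (i, j) = 0" if "i < j" "j < n" for i j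
    using L A that unfolding lower_triangular_mat_def by auto
  have "det A * det B = 1"
    using det_mult[OF A B] AB by simp
  then have "det A \<noteq> 0"
    by auto
  moreover have "det A = (\<Prod>i = 0..<n. A $$ (i, i))"
    using det_lower_triangular[OF A_upper A] prod_list_diag_prod A by auto
  ultimately have A_diag: "A $$ (i, i) \<noteq> 0" if "i < n" for i
    using that by auto
  have "B $$ (r, c) = 0" if "r < c" "c < n" for r c
    using that
  proof (induction r rule: less_induct)
    case (less r)
    have "0 = (A * B) $$ (r, c)"
      using AB less.prems by simp
    also have "\<dots> = (\<Sum>k<n. A $$ (r, k) * B $$ (k, c))"
      using A B less.prems by (simp add: scalar_prod_def lessThan_atLeast0)
    also have "\<dots> = A $$ (r, r) * B $$ (r, c) + (\<Sum>k\<in>{..<n} - {r}. A $$ (r, k) * B $$ (k, c))"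
      using less.prems by (subst sum.remove) auto
    also have "(\<Sum>k\<in>{..<n} - {r}. A $$ (r, k) * B $$ (k, c)) = 0"
      using less A_upper by (intro sum.neutral) (auto simp: nat_neq_iff)
    finally show ?case
      using A_diag less.prems by simp
  qed
  then show ?thesis
    using B unfolding lower_triangular_mat_def by auto
qed

lemma u_row_eq_u_col: "u_row = u_col"
  by (simp add: fun_eq_iff u_row_def u_col_def)

lemma u_col_eq_0:
  assumes "M \<in> carrier_mat p p" "lower_triangular_mat M" "0 < a" "a \<le> i"
  shows "u_col p M a i = 0"
  using assms by (auto simp: u_col_def lower_triangular_mat_def)

lemma banded_smat_mult:
  assumes "banded p q A" "banded p' q' B"
  shows "banded (p + p') (q + q') (smat_mult A B)"
  unfolding banded_def smat_mult_def
proof (intro allI impI infsum_0)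
  fix i j k
  assume "j + (p + p') < i \<or> j > i + (q + q')"
  then have "k + p < i \<or> k > i + q \<or> j + p' < k \<or> j > k + q'"
    by linarith
  then show "A i k * B k j = 0"
    using assms unfolding banded_def by auto
qed

lemma banded_smat_pow:
  assumes "banded p q T"
  shows "banded (n * p) (n * q) (smat_pow T n)"
proof (induction n)
  case 0
  then show ?case
    by (simp add: banded_def smat_id_def)
next
  case (Suc n)
  then show ?case
    using banded_smat_mult[OF Suc assms] by (simp add: add.commute)
qed

lemma smat_mult_eq_sum:
  assumes "finite S" "\<And>k. k \<notin> S \<Longrightarrow> A i k * B k j = 0"
  shows "smat_mult A B i j = (\<Sum>k\<in>S. A i k * B k j)"
proof -
  have "smat_mult A B i j = infsum (\<lambda>k. A i k * B k j) S"
    unfolding smat_mult_def by (rule infsum_cong_neutral) (use assms in auto)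
  then show ?thesis
    using assms(1) by simp
qed

lemma trunc_carrier_mat: "trunc T N \<in> carrier_mat (N + 1) (N + 1)"
  by (simp add: trunc_def)

lemma trunc_pow_Suc_entry:
  assumes "i \<le> N" "j \<le> N"
  shows "(trunc T N ^\<^sub>m Suc n) $$ (i, j) = (\<Sum>k<N + 1. (trunc T N ^\<^sub>m n) $$ (i, k) * T k j)"
proof -
  have "trunc T N ^\<^sub>m n \<in> carrier_mat (N + 1) (N + 1)"
    using pow_carrier_mat trunc_carrier_mat by blast
  then show ?thesis
    using assms by (simp add: scalar_prod_def trunc_def lessThan_atLeast0)
qed

text \<open>The l-th index of a path from i to j of length n is at most i + l q and at most
  j + (n - l) p; since n < s + t, one of l < s and n - l < t holds, so it is at most N.\<close>

lemma trunc_pow_entry_eq_smat_pow: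
  assumes T: "banded p q T" and "i \<le> N" "j \<le> N"
    and i_bound: "\<And>k. k < s \<Longrightarrow> i + k * q \<le> N"
    and "\<And>k. k < t \<Longrightarrow> j + k * p \<le> N" and "n < s + t"
  shows "(trunc T N ^\<^sub>m n) $$ (i, j) = smat_pow T n i j"
  using assms(3,5,6)
proof (induction n arbitrary: j t)
  case 0
  then show ?case
    using \<open>i \<le> N\<close> by (simp add: trunc_def smat_id_def)
next
  case (Suc n)
  have "(trunc T N ^\<^sub>m Suc n) $$ (i, j) = (\<Sum>k<N + 1. (trunc T N ^\<^sub>m n) $$ (i, k) * T k j)"
    using trunc_pow_Suc_entry \<open>i \<le> N\<close> Suc.prems(1) by blast
  also have "\<dots> = (\<Sum>k<N + 1. smat_pow T n i k * T k j)"
  proof (rule sum.cong)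
    fix k
    assume "k \<in> {..<N + 1}"
    show "(trunc T N ^\<^sub>m n) $$ (i, k) * T k j = smat_pow T n i k * T k j"
    proof (cases "k \<le> j + p")
      case True
      have "k + m * p \<le> N" if "m < t - 1" for m
      proof -
        have "j + Suc m * p \<le> N"
          using Suc.prems(2)[of "Suc m"] that by (simp add: less_diff_conv)
        then show ?thesis
          using True by simp
      qed
      moreover have "n < s + (t - 1)"
        using Suc.prems(3) by linarith
      ultimately show ?thesis
        using Suc.IH[of k "t - 1"] \<open>k \<in> {..<N + 1}\<close> by simp
    next
      case False
      then show ?thesis
        using T unfolding banded_def by simp
    qed
  qed simp
  also have "\<dots> = smat_pow T (Suc n) i j"
  proof -
    have "smat_pow T n i k * T k j = 0" if "N < k" for k
    proof (cases "n < s")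
      case True
      then have "i + n * q < k"
        using i_bound that by (meson le_less_trans)
      then show ?thesis
        using banded_smat_pow[OF T] unfolding banded_def by simp
    next
      case False
      then have "j + 1 * p < k"
        using Suc.prems(2)[of 1] Suc.prems(3) that by simp
      then show ?thesis
        using T unfolding banded_def by simp
    qed
    then have "smat_mult (smat_pow T n) T i j = (\<Sum>k<N + 1. smat_pow T n i k * T k j)"
      by (intro smat_mult_eq_sum) auto
    then show ?thesis
      by simp
  qed
  finally show ?case .
qed

lemma smat_pow_entry_beyond_trunc:
  assumes T: "banded p q T" and "N < i \<or> N < j"
    and i_bound: "\<And>k. k < s \<Longrightarrow> i + k * q \<le> N"
    and j_bound: "\<And>k. k < t \<Longrightarrow> j + k * p \<le> N"
    and "n < s + t"
  shows "smat_pow T n i j = 0"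
proof -
  have "j + n * p < i \<or> j > i + n * q"
  proof (cases "N < i")
    case True
    then show ?thesis
      using i_bound[of 0] j_bound[of n] \<open>n < s + t\<close> by (cases "s = 0") auto
  next
    case False
    then show ?thesis
      using assms(2) j_bound[of 0] i_bound[of n] \<open>n < s + t\<close> by (cases "t = 0") auto
  qed
  then show ?thesis
    using banded_smat_pow[OF T] unfolding banded_def by blast
qed

lemma less_nat_ceiling_div_iff:
  assumes "0 < p"
  shows "k < nat \<lceil>(real N + 2 - real a) / real p\<rceil> \<longleftrightarrow> a + k * p \<le> N + 1"
proof -
  have "k < nat \<lceil>(real N + 2 - real a) / real p\<rceil> \<longleftrightarrow> real k < (real N + 2 - real a) / real p"
    by (simp add: zless_nat_eq_int_zless less_ceiling_iff)
  also have "\<dots> \<longleftrightarrow> real (a + k * p) < real (N + 2)"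
    using assms by (simp add: pos_less_divide_eq algebra_simps)
  finally show ?thesis
    by linarith
qed

lemma scalar_prod_mult_mat_vec:
  assumes "Q \<in> carrier_mat m n"
  shows "vec m x \<bullet> (Q *\<^sub>v vec n y) = (\<Sum>i<m. \<Sum>j<n. x i * Q $$ (i, j) * y j)"
  using assms
  by (simp add: scalar_prod_def lessThan_atLeast0 sum_distrib_left mult.assoc)

lemma supported_double_sum_eq_scalar_prod:
  fixes P :: "nat \<Rightarrow> nat \<Rightarrow> 'a::comm_semiring_0"
  assumes Q: "Q \<in> carrier_mat (N + 1) (N + 1)" and "b \<le> q" "a \<le> p"
    and x_0: "\<And>i. b \<le> i \<Longrightarrow> x i = 0" and y_0: "\<And>j. a \<le> j \<Longrightarrow> y j = 0"
    and inside: "\<And>i j. i < b \<Longrightarrow> j < a \<Longrightarrow> i \<le> N \<Longrightarrow> j \<le> N \<Longrightarrow> P i j = Q $$ (i, j)"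
    and beyond: "\<And>i j. i < b \<Longrightarrow> j < a \<Longrightarrow> N < i \<or> N < j \<Longrightarrow> P i j = 0"
  shows "(\<Sum>i<q. \<Sum>j<p. x i * P i j * y j) = vec (N + 1) x \<bullet> (Q *\<^sub>v vec (N + 1) y)"
proof -
  have inside': "x i * P i j * y j = x i * Q $$ (i, j) * y j" if "i \<le> N" "j \<le> N" for i j
    using inside[OF _ _ that] x_0 y_0 by (cases "i < b \<and> j < a") auto
  have beyond': "x i * P i j * y j = 0" if "N < i \<or> N < j" for i j
    using beyond[OF _ _ that] x_0 y_0 by (cases "i < b \<and> j < a") auto
  have "(\<Sum>i<q. \<Sum>j<p. x i * P i j * y j) = (\<Sum>(i, j)\<in>{..<q} \<times> {..<p}. x i * P i j * y j)"
    by (simp add: sum.cartesian_product)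
  also have "\<dots> = (\<Sum>(i, j)\<in>{..<N + 1} \<times> {..<N + 1}. x i * Q $$ (i, j) * y j)"
  proof (rule sum.mono_neutral_cong)
    show "(case z of (i, j) \<Rightarrow> x i * Q $$ (i, j) * y j) = 0"
      if "z \<in> {..<N + 1} \<times> {..<N + 1} - {..<q} \<times> {..<p}" for z
      using that \<open>b \<le> q\<close> \<open>a \<le> p\<close> by (cases z) (auto simp: x_0 y_0)
    show "(case z of (i, j) \<Rightarrow> x i * P i j * y j) = 0"
      if "z \<in> {..<q} \<times> {..<p} - {..<N + 1} \<times> {..<N + 1}" for z
      using that by (cases z) (auto intro!: beyond' simp del: mult_eq_0_iff)
    show "(case z of (i, j) \<Rightarrow> x i * P i j * y j) = (case z of (i, j) \<Rightarrow> x i * Q $$ (i, j) * y j)"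
      if "z \<in> {..<q} \<times> {..<p} \<inter> {..<N + 1} \<times> {..<N + 1}" for z
      using that by (cases z) (simp add: inside')
  qed auto
  also have "\<dots> = vec (N + 1) x \<bullet> (Q *\<^sub>v vec (N + 1) y)"
    unfolding scalar_prod_mult_mat_vec[OF Q] by (simp only: sum.cartesian_product)
  finally show ?thesis .
qed

theorem lemma1:
  fixes p q :: nat and T :: smat and \<nu> \<nu>i \<xi> \<xi>i :: "complex mat" and a b n N :: nat
  assumes "p \<ge> 1" and "q \<ge> 1"
    and "banded p q T"
    and "\<nu> \<in> carrier_mat p p" and "\<nu>i \<in> carrier_mat p p"
    and "inverts_mat \<nu> \<nu>i" and "inverts_mat \<nu>i \<nu>" and "lower_triangular_mat \<nu>"
    and "\<xi> \<in> carrier_mat q q" and "\<xi>i \<in> carrier_mat q q"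
    and "inverts_mat \<xi> \<xi>i" and "inverts_mat \<xi>i \<xi>" and "lower_triangular_mat \<xi>"
    and "a \<in> {1..p}" and "b \<in> {1..q}"
    and "int n \<le> d_ba p q b a N"
  shows "(\<Sum>i<q. \<Sum>j<p. u_row q \<xi>i b i * smat_pow T n i j * u_col p \<nu>i a j)
       = vec (N+1) (u_row q \<xi>i b) \<bullet> ((trunc T N ^\<^sub>m n) *\<^sub>v vec (N+1) (u_col p \<nu>i a))"
proof -
  define s t where "s = nat \<lceil>(real N + 2 - real b) / real q\<rceil>"
    and "t = nat \<lceil>(real N + 2 - real a) / real p\<rceil>"
  have "n < s + t"
    using assms(16) unfolding d_ba_def s_def t_def by linarith
  have i_bound: "i + k * q \<le> N" if "i < b" "k < s" for i k
    using that less_nat_ceiling_div_iff[of q k N b] assms(2) unfolding s_def by auto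
  have j_bound: "j + k * p \<le> N" if "j < a" "k < t" for j k
    using that less_nat_ceiling_div_iff[of p k N a] assms(1) unfolding t_def by auto
  have "lower_triangular_mat \<xi>i" "lower_triangular_mat \<nu>i"
    using lower_triangular_mat_inverse assms(4-6,8-11,13) unfolding inverts_mat_def by auto
  show ?thesis
  proof (rule supported_double_sum_eq_scalar_prod)
    show "trunc T N ^\<^sub>m n \<in> carrier_mat (N + 1) (N + 1)"
      using pow_carrier_mat trunc_carrier_mat by blast
    show "b \<le> q" "a \<le> p"
      using assms(14,15) by auto
    show "u_row q \<xi>i b i = 0" if "b \<le> i" for i
      using u_col_eq_0 \<open>lower_triangular_mat \<xi>i\<close> assms(10,15) that unfolding u_row_eq_u_col by auto
    show "u_col p \<nu>i a j = 0" if "a \<le> j" for j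
      using u_col_eq_0 \<open>lower_triangular_mat \<nu>i\<close> assms(5,14) that by auto
    show "smat_pow T n i j = (trunc T N ^\<^sub>m n) $$ (i, j)" if "i < b" "j < a" "i \<le> N" "j \<le> N" for i j
      using trunc_pow_entry_eq_smat_pow[OF assms(3) \<open>i \<le> N\<close> \<open>j \<le> N\<close> i_bound[OF \<open>i < b\<close>]
          j_bound[OF \<open>j < a\<close>] \<open>n < s + t\<close>] by simp
    show "smat_pow T n i j = 0" if "i < b" "j < a" "N < i \<or> N < j" for i j
      using smat_pow_entry_beyond_trunc[OF assms(3) \<open>N < i \<or> N < j\<close> i_bound[OF \<open>i < b\<close>]
          j_bound[OF \<open>j < a\<close>] \<open>n < s + t\<close>] .
  qed
qed

end
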